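(* In the setting described in the context, if the pricing kernel $\{\pi_t\}$ is asymptotically tail-Pareto with index $\lambda>0$, then for all $t\ge0$ the long tail-Pareto rate satisfies $0<L^{(\lambda)}_{t\infty}<\infty$ and takes the form $$L^{(\lambda)}_{t\infty}=\lambda\left(\pi_t/\theta_t\right)^{1/\lambda},$$ where $\{\theta_t\}_{t\ge0}$ is a strictly positive supermartingale.
   Context: Let $(\Omega,\mathcal F,\mathbb P)$ be a probability space with a filtration $\{\mathcal F_t\}_{t\ge0}$ satisfying the usual conditions; (in)equalities between random variables hold a.s. A pricing kernel is an $\{\mathcal F_t\}$-adapted càdlàg semimartingale $\{\pi_t\}_{t\ge0}$ with (a) $\pi_t>0$, (b) $\mathbb E[\pi_t]<\infty$ for all $t\ge0$, (c) $\liminf_{t\to\infty}\mathbb E[\pi_t]=0$. The associated discount bond prices are $P_{tT}=\pi_t^{-1}\mathbb E[\pi_T\mid\mathcal F_t]$ for $0\le t<T$. A pricing kernel is asymptotically tail-Pareto with index $\lambda>0$ if (i) $\liminf_{t\to\infty}t^\lambda\pi_t>0$ and (ii) $\liminf_{t\to\infty}\mathbb E[t^\lambda\pi_t]<\infty$. The tail-Pareto rate $L^{(\lambda)}_{tT}$ is defined by $P_{tT}=\left[1+\lambda^{-1}(T-t)L^{(\lambda)}_{tT}\right]^{-\lambda}$, and the long tail-Pareto rate is $L^{(\lambda)}_{t\infty}=\limsup_{T\to\infty}L^{(\lambda)}_{tT}$. Limits superior/inferior over the continuum parameter $T$ of families of $\mathcal F_t$-measurable random variables are essential ones: $\limsup_{T\to\infty}A_T:=\operatorname{ess\,inf}_{x}\operatorname{ess\,sup}_{T\ge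 x}A_T$ and $\liminf_{T\to\infty}A_T:=\operatorname{ess\,sup}_{x}\operatorname{ess\,inf}_{T\ge x}A_T$, taken among $\mathcal F_t$-measurable random variables. *)

theory Defs
  imports "HOL-Probability.Probability"
begin

definition filtration_on :: "'a measure \<Rightarrow> (real \<Rightarrow> 'a measure) \<Rightarrow> bool" where
  "filtration_on M F \<longleftrightarrow>
     (\<forall>t\<ge>0. subalgebra M (F t)) \<and>
     (\<forall>s t. 0 \<le> s \<longrightarrow> s \<le> t \<longrightarrow> sets (F s) \<subseteq> sets (F t))"

definition usual_conditions :: "'a measure \<Rightarrow> (real \<Rightarrow> 'a measure) \<Rightarrow> bool" where
  "usual_conditions M F \<longleftrightarrow>
     complete_measure M \<and>
     null_sets M \<subseteq> sets (F 0) \<and>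
     (\<forall>t\<ge>0. sets (F t) = (\<Inter>s\<in>{t<..}. sets (F s)))"

definition adapted :: "(real \<Rightarrow> 'a measure) \<Rightarrow> (real \<Rightarrow> 'a \<Rightarrow> real) \<Rightarrow> bool" where
  "adapted F X \<longleftrightarrow> (\<forall>t\<ge>0. X t \<in> borel_measurable (F t))"

definition cadlag_paths :: "'a measure \<Rightarrow> (real \<Rightarrow> 'a \<Rightarrow> real) \<Rightarrow> bool" where
  "cadlag_paths M X \<longleftrightarrow>
     (\<forall>\<omega>\<in>space M. \<forall>t\<ge>0.
        continuous (at_right t) (\<lambda>s. X s \<omega>) \<and>
        (0 < t \<longrightarrow> (\<exists>l. ((\<lambda>s. X s \<omega>) \<longlongrightarrow> l) (at_left t))))"

definition supermartingale :: "'a measure \<Rightarrow> (real \<Rightarrow> 'a measure) \<Rightarrow> (real \<Rightarrow> 'a \<Rightarrow> real) \<Rightarrow> bool" where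
  "supermartingale M F X \<longleftrightarrow>
     adapted F X \<and> (\<forall>t\<ge>0. integrable M (X t)) \<and>
     (\<forall>s t. 0 \<le> s \<longrightarrow> s \<le> t \<longrightarrow>
        (AE \<omega> in M. real_cond_exp M (F s) (X t) \<omega> \<le> X s \<omega>))"

definition pricing_kernel :: "'a measure \<Rightarrow> (real \<Rightarrow> 'a measure) \<Rightarrow> (real \<Rightarrow> 'a \<Rightarrow> real) \<Rightarrow> bool" where
  "pricing_kernel M F \<pi> \<longleftrightarrow>
     adapted F \<pi> \<and> cadlag_paths M \<pi> \<and>
     (\<forall>t\<ge>0. AE \<omega> in M. \<pi> t \<omega> > 0) \<and>
     (\<forall>t\<ge>0. integrable M (\<pi> t)) \<and>
     Liminf at_top (\<lambda>t. ereal (integral\<^sup>L M (\<pi> t))) = 0"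
  (* the semimartingale property is not formalised *)

definition asymptotically_tail_pareto ::
    "'a measure \<Rightarrow> (real \<Rightarrow> 'a \<Rightarrow> real) \<Rightarrow> real \<Rightarrow> bool" where
  "asymptotically_tail_pareto M \<pi> lam \<longleftrightarrow>
     (AE \<omega> in M. Liminf at_top (\<lambda>t. ereal (t powr lam * \<pi> t \<omega>)) > 0) \<and>
     Liminf at_top (\<lambda>t. ereal (integral\<^sup>L M (\<lambda>\<omega>. t powr lam * \<pi> t \<omega>))) < \<infinity>"

definition bond_price :: "'a measure \<Rightarrow> (real \<Rightarrow> 'a measure) \<Rightarrow> (real \<Rightarrow> 'a \<Rightarrow> real)
    \<Rightarrow> real \<Rightarrow> real \<Rightarrow> 'a \<Rightarrow> real" where
  "bond_price M F \<pi> t T \<omega> = real_cond_exp M (F t) (\<pi> T) \<omega> / \<pi> t \<omega>"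

text \<open>Tail-Pareto rate, the solution L of P = (1 + (T-t) L / \<lambda>) powr (-\<lambda>) (for P > 0, T > t).\<close>
definition tail_pareto_rate :: "'a measure \<Rightarrow> (real \<Rightarrow> 'a measure) \<Rightarrow> (real \<Rightarrow> 'a \<Rightarrow> real)
    \<Rightarrow> real \<Rightarrow> real \<Rightarrow> real \<Rightarrow> 'a \<Rightarrow> real" where
  "tail_pareto_rate M F \<pi> lam t T \<omega> =
     lam / (T - t) * (bond_price M F \<pi> t T \<omega> powr (- 1 / lam) - 1)"

definition is_ess_sup_fam :: "'a measure \<Rightarrow> 'a measure \<Rightarrow> 'i set \<Rightarrow> ('i \<Rightarrow> 'a \<Rightarrow> ereal)
    \<Rightarrow> ('a \<Rightarrow> ereal) \<Rightarrow> bool" where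
  "is_ess_sup_fam M N I f g \<longleftrightarrow>
     g \<in> borel_measurable N \<and>
     (\<forall>i\<in>I. AE \<omega> in M. f i \<omega> \<le> g \<omega>) \<and>
     (\<forall>h\<in>borel_measurable N. (\<forall>i\<in>I. AE \<omega> in M. f i \<omega> \<le> h \<omega>) \<longrightarrow> (AE \<omega> in M. g \<omega> \<le> h \<omega>))"

definition is_ess_inf_fam :: "'a measure \<Rightarrow> 'a measure \<Rightarrow> 'i set \<Rightarrow> ('i \<Rightarrow> 'a \<Rightarrow> ereal)
    \<Rightarrow> ('a \<Rightarrow> ereal) \<Rightarrow> bool" where
  "is_ess_inf_fam M N I f g \<longleftrightarrow>
     g \<in> borel_measurable N \<and>
     (\<forall>i\<in>I. AE \<omega> in M. g \<omega> \<le> f i \<omega>) \<and>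
     (\<forall>h\<in>borel_measurable N. (\<forall>i\<in>I. AE \<omega> in M. h \<omega> \<le> f i \<omega>) \<longrightarrow> (AE \<omega> in M. h \<omega> \<le> g \<omega>))"

definition ess_sup_fam :: "'a measure \<Rightarrow> 'a measure \<Rightarrow> 'i set \<Rightarrow> ('i \<Rightarrow> 'a \<Rightarrow> ereal) \<Rightarrow> 'a \<Rightarrow> ereal" where
  "ess_sup_fam M N I f = (SOME g. is_ess_sup_fam M N I f g)"

definition ess_inf_fam :: "'a measure \<Rightarrow> 'a measure \<Rightarrow> 'i set \<Rightarrow> ('i \<Rightarrow> 'a \<Rightarrow> ereal) \<Rightarrow> 'a \<Rightarrow> ereal" where
  "ess_inf_fam M N I f = (SOME g. is_ess_inf_fam M N I f g)"

definition ess_limsup_top :: "'a measure \<Rightarrow> 'a measure \<Rightarrow> real set \<Rightarrow> (real \<Rightarrow> 'a \<Rightarrow> ereal) \<Rightarrow> 'a \<Rightarrow> ereal" where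
  "ess_limsup_top M N D f = ess_inf_fam M N (UNIV :: real set) (\<lambda>x. ess_sup_fam M N {T\<in>D. x \<le> T} f)"

definition long_tail_pareto_rate :: "'a measure \<Rightarrow> (real \<Rightarrow> 'a measure) \<Rightarrow> (real \<Rightarrow> 'a \<Rightarrow> real)
    \<Rightarrow> real \<Rightarrow> real \<Rightarrow> 'a \<Rightarrow> ereal" where
  "long_tail_pareto_rate M F \<pi> lam t =
     ess_limsup_top M (F t) {t<..} (\<lambda>T \<omega>. ereal (tail_pareto_rate M F \<pi> lam t T \<omega>))"

end

theory Submission
  imports Defs
begin

text \<open>
  Put \<open>\<Theta>\<^sub>t = ess sup\<^sub>x ess inf\<^sub>T\<^sub>\<ge>\<^sub>x (T - t)\<^sup>\<lambda> E[\<pi>\<^sub>T | F\<^sub>t]\<close>, the essential lower limit of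
  \<open>(T - t)\<^sup>\<lambda> \<pi>\<^sub>t P\<^sub>t\<^sub>T\<close>. Solving the defining equation of the tail-Pareto rate gives
  \<open>L\<^sub>t\<^sub>T + \<lambda>/(T - t) = \<lambda> (\<pi>\<^sub>t / ((T - t)\<^sup>\<lambda> E[\<pi>\<^sub>T | F\<^sub>t]))\<^sup>1\<^sup>/\<^sup>\<lambda>\<close>, and
  \<open>v \<mapsto> \<lambda> (\<pi>\<^sub>t / v)\<^sup>1\<^sup>/\<^sup>\<lambda>\<close> is an order-reversing bijection of \<open>[0, \<infinity>]\<close>; being one half of an
  antitone Galois connection it turns the essential lower limit of the weighted bond prices
  into the essential upper limit of the rates, so \<open>L\<^sub>t\<^sub>\<infinity> = \<lambda> (\<pi>\<^sub>t / \<Theta>\<^sub>t)\<^sup>1\<^sup>/\<^sup>\<lambda>\<close>.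

  Finiteness: \<open>E \<Theta>\<^sub>t \<le> liminf E[T\<^sup>\<lambda> \<pi>\<^sub>T] < \<infinity>\<close> by monotone convergence.
  Positivity: if \<open>y \<le> T\<^sup>\<lambda> \<pi>\<^sub>T\<close> for all large \<open>T\<close>, then a multiple of \<open>E[y | F\<^sub>t]\<close> lies below
  \<open>\<Theta>\<^sub>t\<close>, so \<open>y\<close> vanishes on \<open>{\<Theta>\<^sub>t = 0}\<close>; since \<open>liminf T\<^sup>\<lambda> \<pi>\<^sub>T > 0\<close> pathwise, that set is null.
  Supermartingale: by the tower property \<open>E[(T - t)\<^sup>\<lambda> E[\<pi>\<^sub>T | F\<^sub>t] | F\<^sub>s] \<le> (T - s)\<^sup>\<lambda> E[\<pi>\<^sub>T | F\<^sub>s]\<close>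
  for \<open>s \<le> t\<close>, and the inequality passes to the increasing limit in \<open>x\<close> by dominated
  convergence.
\<close>

section \<open>Essential suprema and infima of families of random variables\<close>

definition ereal_arctan :: "ereal \<Rightarrow> real" where
  "ereal_arctan x =
     arctan (real_of_ereal x) + (if x = \<infinity> then pi/2 else if x = -\<infinity> then -pi/2 else 0)"

lemma strict_mono_ereal_arctan: "strict_mono ereal_arctan"
proof
  fix x y :: ereal
  assume "x < y"
  then show "ereal_arctan x < ereal_arctan y"
    using arctan_bounded by (cases x; cases y) (auto simp: ereal_arctan_def arctan_less_iff)
qed

lemma ereal_arctan_le_iff [simp]: "ereal_arctan x \<le> ereal_arctan y \<longleftrightarrow> x \<le> y"
  by (rule strict_mono_less_eq[OF strict_mono_ereal_arctan])

lemma ereal_arctan_eq_iff [simp]: "ereal_arctan x = ereal_arctan y \<longleftrightarrow> x = y"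
  by (rule strict_mono_eq[OF strict_mono_ereal_arctan])

lemma borel_measurable_ereal_arctan [measurable]: "ereal_arctan \<in> borel_measurable borel"
  unfolding ereal_arctan_def by measurable

lemma abs_ereal_arctan_le: "\<bar>ereal_arctan x\<bar> \<le> pi/2"
proof (cases x)
  case (real r)
  then show ?thesis
    using arctan_bounded[of r] by (simp add: ereal_arctan_def abs_le_iff del: mult.commute) linarith
qed (simp_all add: ereal_arctan_def)

lemma ereal_arctan_le: "ereal_arctan x \<le> pi/2"
  using abs_ereal_arctan_le[of x] by (simp add: abs_le_iff)

lemma countable_subset_maximizing:
  fixes V :: "'i set \<Rightarrow> real"
  assumes mono: "\<And>J J'. countable J' \<Longrightarrow> J \<subseteq> J' \<Longrightarrow> J' \<subseteq> I \<Longrightarrow> V J \<le> V J'"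
    and bounded: "\<And>J. countable J \<Longrightarrow> J \<subseteq> I \<Longrightarrow> V J \<le> B"
  obtains J where "countable J" "J \<subseteq> I"
    and "\<And>J'. countable J' \<Longrightarrow> J \<subseteq> J' \<Longrightarrow> J' \<subseteq> I \<Longrightarrow> V J' = V J"
proof -
  define C where "C = {J. countable J \<and> J \<subseteq> I}"
  define \<alpha> where "\<alpha> = Sup (V ` C)"
  have "{} \<in> C" by (simp add: C_def)
  have bdd: "bdd_above (V ` C)" using bounded by (auto simp: C_def bdd_above_def)
  have upper: "V J \<le> \<alpha>" if "J \<in> C" for J
    unfolding \<alpha>_def using bdd that by (intro cSup_upper) auto
  have "\<exists>J\<in>C. \<alpha> - inverse (real (Suc n)) < V J" for n :: nat
  proof -
    have "\<alpha> - inverse (real (Suc n)) < Sup (V ` C)" unfolding \<alpha>_def by simp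
    then show ?thesis using \<open>{} \<in> C\<close> bdd by (subst (asm) less_cSup_iff) auto
  qed
  then obtain Jn where Jn: "\<And>n. Jn n \<in> C" "\<And>n. \<alpha> - inverse (real (Suc n)) < V (Jn n)" by metis
  define J where "J = (\<Union>n. Jn n)"
  have J: "countable J" "J \<subseteq> I" using Jn(1) by (auto simp: C_def J_def)
  have "\<alpha> \<le> V J"
  proof (rule field_le_epsilon)
    fix e :: real assume "0 < e"
    then obtain n where "inverse (real (Suc n)) < e" using reals_Archimedean by blast
    moreover have "V (Jn n) \<le> V J" by (rule mono[OF J(1) _ J(2)]) (auto simp: J_def)
    ultimately show "\<alpha> \<le> V J + e" using Jn(2)[of n] by linarith
  qed
  show ?thesis
  proof (rule that[OF J])
    fix J' assume J': "countable J'" "J \<subseteq> J'" "J' \<subseteq> I"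
    then show "V J' = V J"
      using mono[OF J'] upper[of J'] \<open>\<alpha> \<le> V J\<close> by (auto simp: C_def)
  qed
qed

text \<open>Maximise the bounded functional \<open>J \<mapsto> E[arctan (sup\<^sub>j\<^sub>\<in>\<^sub>J f\<^sub>j)]\<close> over countable \<open>J\<close>.\<close>
lemma is_ess_sup_fam_countable_SUP:
  fixes f :: "'i \<Rightarrow> 'a \<Rightarrow> ereal"
  assumes "prob_space M" and sub: "subalgebra M N"
    and f_meas: "\<And>i. i \<in> I \<Longrightarrow> f i \<in> borel_measurable N"
  obtains J where "countable J" "J \<subseteq> I" "is_ess_sup_fam M N I f (\<lambda>\<omega>. SUP j\<in>J. f j \<omega>)"
proof -
  interpret prob_space M by fact
  define s where "s J \<omega> = (SUP j\<in>J. f j \<omega>)" for J \<omega>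
  define V where "V J = (\<integral>\<omega>. ereal_arctan (s J \<omega>) \<partial>M)" for J
  have s_meas: "s J \<in> borel_measurable N" if "countable J" "J \<subseteq> I" for J
    unfolding s_def[abs_def] using that f_meas by (intro borel_measurable_SUP) auto
  have int: "integrable M (\<lambda>\<omega>. ereal_arctan (s J \<omega>))" if "countable J" "J \<subseteq> I" for J
    using measurable_from_subalg[OF sub s_meas[OF that]] abs_ereal_arctan_le
    by (intro integrable_const_bound[where B="pi/2"]) auto
  have V_mono: "V J \<le> V J'" if "countable J'" "J \<subseteq> J'" "J' \<subseteq> I" for J J'
    unfolding V_def using that countable_subset[OF that(2,1)]
    by (intro integral_mono int) (auto simp: s_def intro: SUP_subset_mono)
  have "V J \<le> pi/2" if "countable J" "J \<subseteq> I" for J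
  proof -
    have "V J \<le> (\<integral>\<omega>. pi/2 \<partial>M)"
      unfolding V_def using int[OF that] ereal_arctan_le by (intro integral_mono) auto
    then show ?thesis by (simp add: prob_space)
  qed
  then obtain J where J: "countable J" "J \<subseteq> I"
    and J_max: "\<And>J'. countable J' \<Longrightarrow> J \<subseteq> J' \<Longrightarrow> J' \<subseteq> I \<Longrightarrow> V J' = V J"
    using countable_subset_maximizing[of I V] V_mono by metis
  show ?thesis
  proof (rule that[OF J], unfold is_ess_sup_fam_def, intro conjI ballI impI)
    show "(\<lambda>\<omega>. SUP j\<in>J. f j \<omega>) \<in> borel_measurable N"
      using s_meas[OF J] by (simp add: s_def[abs_def])
  next
    fix i assume "i \<in> I"
    then have J': "countable (insert i J)" "insert i J \<subseteq> I" using J by auto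
    have le: "ereal_arctan (s J \<omega>) \<le> ereal_arctan (s (insert i J) \<omega>)" for \<omega>
      by (auto simp: s_def intro: SUP_subset_mono)
    have "(\<integral>\<omega>. ereal_arctan (s (insert i J) \<omega>) - ereal_arctan (s J \<omega>) \<partial>M) = 0"
      using J_max[OF J'(1) _ J'(2)] int[OF J'] int[OF J] by (auto simp: V_def)
    then have "AE \<omega> in M. ereal_arctan (s (insert i J) \<omega>) - ereal_arctan (s J \<omega>) = 0"
      using int[OF J'] int[OF J] le by (subst (asm) integral_nonneg_eq_0_iff_AE) auto
    then show "AE \<omega> in M. f i \<omega> \<le> (SUP j\<in>J. f j \<omega>)"
      by eventually_elim (simp add: s_def max.absorb_iff2[symmetric])
  next
    fix h :: "'a \<Rightarrow> ereal"
    assume "\<forall>i\<in>I. AE \<omega> in M. f i \<omega> \<le> h \<omega>"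
    then have "AE \<omega> in M. \<forall>j\<in>J. f j \<omega> \<le> h \<omega>"
      using J by (subst AE_ball_countable) auto
    then show "AE \<omega> in M. (SUP j\<in>J. f j \<omega>) \<le> h \<omega>"
      by eventually_elim (auto intro: SUP_least)
  qed
qed

lemma is_ess_inf_fam_countable_INF:
  fixes f :: "'i \<Rightarrow> 'a \<Rightarrow> ereal"
  assumes "prob_space M" and "subalgebra M N"
    and f_meas: "\<And>i. i \<in> I \<Longrightarrow> f i \<in> borel_measurable N"
  obtains J where "countable J" "J \<subseteq> I" "is_ess_inf_fam M N I f (\<lambda>\<omega>. INF j\<in>J. f j \<omega>)"
proof -
  obtain J where J: "countable J" "J \<subseteq> I"
    and S: "is_ess_sup_fam M N I (\<lambda>i \<omega>. - f i \<omega>) (\<lambda>\<omega>. SUP j\<in>J. - f j \<omega>)"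
    using is_ess_sup_fam_countable_SUP[OF assms(1,2), of I "\<lambda>i \<omega>. - f i \<omega>"] f_meas by auto
  have neg: "(SUP j\<in>J. - f j \<omega>) = - (INF j\<in>J. f j \<omega>)" for \<omega>
    by (rule ereal_SUP_uminus_eq)
  show ?thesis
  proof (rule that[OF J], unfold is_ess_inf_fam_def, intro conjI ballI impI)
    show "(\<lambda>\<omega>. INF j\<in>J. f j \<omega>) \<in> borel_measurable N"
      using S unfolding is_ess_sup_fam_def neg by simp
  next
    fix i assume "i \<in> I"
    then have "AE \<omega> in M. - f i \<omega> \<le> - (INF j\<in>J. f j \<omega>)"
      using S unfolding is_ess_sup_fam_def neg by auto
    then show "AE \<omega> in M. (INF j\<in>J. f j \<omega>) \<le> f i \<omega>"
      by eventually_elim (simp add: ereal_uminus_le_reorder)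
  next
    fix h :: "'a \<Rightarrow> ereal"
    assume "h \<in> borel_measurable N" and "\<forall>i\<in>I. AE \<omega> in M. h \<omega> \<le> f i \<omega>"
    then have bound: "\<forall>i\<in>I. AE \<omega> in M. - f i \<omega> \<le> - h \<omega>"
      by (auto elim!: eventually_mono)
    have "\<forall>h\<in>borel_measurable N. (\<forall>i\<in>I. AE \<omega> in M. - f i \<omega> \<le> h \<omega>) \<longrightarrow>
        (AE \<omega> in M. - (INF j\<in>J. f j \<omega>) \<le> h \<omega>)"
      using S unfolding is_ess_sup_fam_def neg by blast
    from this[rule_format, of "\<lambda>\<omega>. - h \<omega>"] bound \<open>h \<in> borel_measurable N\<close>
    have "AE \<omega> in M. - (INF j\<in>J. f j \<omega>) \<le> - h \<omega>" by simp
    then show "AE \<omega> in M. h \<omega> \<le> (INF j\<in>J. f j \<omega>)"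
      by eventually_elim simp
  qed
qed

lemma is_ess_sup_fam_ess_sup_fam:
  fixes f :: "'i \<Rightarrow> 'a \<Rightarrow> ereal"
  assumes "prob_space M" "subalgebra M N" "\<And>i. i \<in> I \<Longrightarrow> f i \<in> borel_measurable N"
  shows "is_ess_sup_fam M N I f (ess_sup_fam M N I f)"
proof -
  obtain J where "countable J" "J \<subseteq> I" and J: "is_ess_sup_fam M N I f (\<lambda>\<omega>. SUP j\<in>J. f j \<omega>)"
    by (rule is_ess_sup_fam_countable_SUP[OF assms])
  show ?thesis unfolding ess_sup_fam_def by (rule someI[where P="is_ess_sup_fam M N I f", OF J])
qed

lemma is_ess_inf_fam_ess_inf_fam:
  fixes f :: "'i \<Rightarrow> 'a \<Rightarrow> ereal"
  assumes "prob_space M" "subalgebra M N" "\<And>i. i \<in> I \<Longrightarrow> f i \<in> borel_measurable N"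
  shows "is_ess_inf_fam M N I f (ess_inf_fam M N I f)"
proof -
  obtain J where "countable J" "J \<subseteq> I" and J: "is_ess_inf_fam M N I f (\<lambda>\<omega>. INF j\<in>J. f j \<omega>)"
    by (rule is_ess_inf_fam_countable_INF[OF assms])
  show ?thesis unfolding ess_inf_fam_def by (rule someI[where P="is_ess_inf_fam M N I f", OF J])
qed

section \<open>Conditional expectations\<close>

context sigma_finite_subalgebra
begin

lemma AE_le_if_indicator_integral_le:
  fixes u v :: "'a \<Rightarrow> real"
  assumes "u \<in> borel_measurable F" "v \<in> borel_measurable F"
    and int: "integrable M u" "integrable M v"
    and le: "\<And>A. A \<in> sets F \<Longrightarrow> (\<integral>x. indicator A x * u x \<partial>M) \<le> (\<integral>x. indicator A x * v x \<partial>M)"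
  shows "AE x in M. u x \<le> v x"
proof -
  define B where "B = {x\<in>space M. v x < u x}"
  have "space F = space M" using subalg by (simp add: subalgebra_def)
  moreover have "{x\<in>space F. v x < u x} \<in> sets F" using assms(1,2) by measurable
  ultimately have B_F: "B \<in> sets F" by (simp add: B_def)
  then have B_M: "B \<in> sets M" using subalg by (auto simp: subalgebra_def)
  have int_B: "integrable M (\<lambda>x. indicator B x * u x)" "integrable M (\<lambda>x. indicator B x * v x)"
    using integrable_real_mult_indicator[OF B_M int(1)] integrable_real_mult_indicator[OF B_M int(2)]
    by (simp_all add: mult.commute)
  have nonneg: "0 \<le> indicator B x * (u x - v x)" for x
    by (auto simp: indicator_def B_def)
  have "(\<integral>x. indicator B x * (u x - v x) \<partial>M) \<le> 0"
    using le[OF B_F] int_B by (simp add: right_diff_distrib)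
  then have "(\<integral>x. indicator B x * (u x - v x) \<partial>M) = 0"
    using nonneg by (intro antisym integral_nonneg) auto
  then have "AE x in M. indicator B x * (u x - v x) = 0"
    using int_B nonneg by (subst (asm) integral_nonneg_eq_0_iff_AE) (auto simp: right_diff_distrib)
  then show ?thesis
    using AE_space by eventually_elim (auto simp: B_def indicator_def split: if_splits)
qed

lemma real_cond_exp_le_of_dominated_limit:
  assumes lim: "AE x in M. (\<lambda>n. X n x) \<longlonglongrightarrow> Y x"
    and dom: "\<And>n. AE x in M. norm (X n x) \<le> W x" "integrable M W"
    and [measurable]: "\<And>n. X n \<in> borel_measurable M" "Y \<in> borel_measurable M"
    and le: "\<forall>\<^sub>F n in sequentially. AE x in M. real_cond_exp M F (X n) x \<le> Z x"
    and [measurable]: "Z \<in> borel_measurable F" and "integrable M Z"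
  shows "AE x in M. real_cond_exp M F Y x \<le> Z x"
proof -
  have X_int: "integrable M (X n)" for n
    using dom(1)[of n] by (intro Bochner_Integration.integrable_bound[OF dom(2)]) (auto elim!: eventually_mono)
  have Y_int: "integrable M Y"
    by (rule integrable_dominated_convergence[OF _ _ dom(2) lim dom(1)]) auto
  show ?thesis
  proof (rule AE_le_if_indicator_integral_le)
    fix A assume A: "A \<in> sets F"
    then have A_M: "A \<in> sets M" using subalg by (auto simp: subalgebra_def)
    have "(\<lambda>n. \<integral>x. indicator A x * X n x \<partial>M) \<longlonglongrightarrow> (\<integral>x. indicator A x * Y x \<partial>M)"
    proof (rule integral_dominated_convergence[where w=W])
      show "AE x in M. (\<lambda>n. indicator A x * X n x) \<longlonglongrightarrow> indicator A x * Y x"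
        using lim by eventually_elim (rule tendsto_mult_left)
      show "AE x in M. norm (indicator A x * X n x) \<le> W x" for n
        using dom(1)[of n] by eventually_elim (auto simp: indicator_def)
    qed (use A_M dom(2) in auto)
    moreover have "\<forall>\<^sub>F n in sequentially.
        (\<integral>x. indicator A x * X n x \<partial>M) \<le> (\<integral>x. indicator A x * Z x \<partial>M)"
      using le
    proof eventually_elim
      case (elim n)
      have "(\<integral>x. indicator A x * X n x \<partial>M) = (\<integral>x. indicator A x * real_cond_exp M F (X n) x \<partial>M)"
        using integrable_real_mult_indicator[OF A_M X_int] A
        by (intro real_cond_exp_intg(2)[symmetric]) (auto simp: mult.commute)
      also have "\<dots> \<le> (\<integral>x. indicator A x * Z x \<partial>M)"
        using integrable_real_mult_indicator[OF A_M real_cond_exp_int(1)[OF X_int]]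
          integrable_real_mult_indicator[OF A_M \<open>integrable M Z\<close>] elim
        by (intro integral_mono_AE) (auto simp: mult.commute indicator_def elim!: eventually_mono)
      finally show ?case .
    qed
    ultimately have "(\<integral>x. indicator A x * Y x \<partial>M) \<le> (\<integral>x. indicator A x * Z x \<partial>M)"
      by (rule tendsto_le[OF trivial_limit_sequentially tendsto_const])
    then show "(\<integral>x. indicator A x * real_cond_exp M F Y x \<partial>M) \<le> (\<integral>x. indicator A x * Z x \<partial>M)"
      using integrable_real_mult_indicator[OF A_M Y_int] A
      by (subst real_cond_exp_intg(2)) (auto simp: mult.commute)
  qed (use Y_int \<open>integrable M Z\<close> in auto)
qed

lemma AE_eq_0_on_if_real_cond_exp_nonpos:
  assumes f: "integrable M f" "AE x in M. 0 \<le> f x"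
    and A: "A \<in> sets F" and nonpos: "AE x in M. x \<in> A \<longrightarrow> real_cond_exp M F f x \<le> 0"
  shows "AE x in M. x \<in> A \<longrightarrow> f x = 0"
proof -
  have A_M: "A \<in> sets M" using A subalg by (auto simp: subalgebra_def)
  have int_Af: "integrable M (\<lambda>x. indicator A x * f x)"
    using integrable_real_mult_indicator[OF A_M f(1)] by (simp add: mult.commute)
  have "(\<integral>x. indicator A x * f x \<partial>M) = (\<integral>x. indicator A x * real_cond_exp M F f x \<partial>M)"
    using int_Af A f(1) by (intro real_cond_exp_intg(2)[symmetric]) auto
  also have "\<dots> \<le> 0"
  proof -
    have "0 \<le> (\<integral>x. - (indicator A x * real_cond_exp M F f x) \<partial>M)"
      using nonpos by (intro integral_nonneg_AE) (auto simp: indicator_def elim!: eventually_mono)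
    then show ?thesis by simp
  qed
  finally have "(\<integral>x. indicator A x * f x \<partial>M) = 0"
    using f(2) by (intro antisym integral_nonneg_AE) (auto elim!: eventually_mono)
  then have "AE x in M. indicator A x * f x = 0"
    using int_Af f(2) by (subst (asm) integral_nonneg_eq_0_iff_AE) (auto elim!: eventually_mono)
  then show ?thesis by eventually_elim (auto simp: indicator_def split: if_splits)
qed

end

section \<open>The rate transform\<close>

lemma powr_inverse_le_iff:
  fixes a b l :: real
  assumes "0 < l" "0 \<le> a" "0 \<le> b"
  shows "a powr (1/l) \<le> b \<longleftrightarrow> a \<le> b powr l"
proof
  assume "a powr (1/l) \<le> b"
  then have "(a powr (1/l)) powr l \<le> b powr l" using assms by (intro powr_mono2) auto
  then show "a \<le> b powr l" using assms by (simp add: powr_powr)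
next
  assume "a \<le> b powr l"
  then have "a powr (1/l) \<le> (b powr l) powr (1/l)" using assms by (intro powr_mono2) auto
  then show "a powr (1/l) \<le> b" using assms by (simp add: powr_powr)
qed

lemma le_powr_inverse_iff:
  fixes a b l :: real
  assumes "0 < l" "0 \<le> a" "0 \<le> b"
  shows "b \<le> a powr (1/l) \<longleftrightarrow> b powr l \<le> a"
proof
  assume "b \<le> a powr (1/l)"
  then have "b powr l \<le> (a powr (1/l)) powr l" using assms by (intro powr_mono2) auto
  then show "b powr l \<le> a" using assms by (simp add: powr_powr)
next
  assume "b powr l \<le> a"
  then have "(b powr l) powr (1/l) \<le> a powr (1/l)" using assms by (intro powr_mono2) auto
  then show "b \<le> a powr (1/l)" using assms by (simp add: powr_powr)
qed

lemma pareto_rate_le_iff: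
  fixes l p v s :: real
  assumes "0 < l" "0 < p" "0 < v" "0 < s"
  shows "l * (p / v) powr (1/l) \<le> s \<longleftrightarrow> p * (l / s) powr l \<le> v"
proof -
  have "l * (p / v) powr (1/l) \<le> s \<longleftrightarrow> (p / v) powr (1/l) \<le> s / l"
    using assms by (simp add: field_simps)
  also have "\<dots> \<longleftrightarrow> p / v \<le> (s / l) powr l"
    using assms by (intro powr_inverse_le_iff) auto
  also have "\<dots> \<longleftrightarrow> p * (l / s) powr l \<le> v"
    using assms by (simp add: powr_divide field_simps)
  finally show ?thesis .
qed

lemma le_pareto_rate_iff:
  fixes l p v s :: real
  assumes "0 < l" "0 < p" "0 < v" "0 < s"
  shows "s \<le> l * (p / v) powr (1/l) \<longleftrightarrow> v \<le> p * (l / s) powr l"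
proof -
  have "s \<le> l * (p / v) powr (1/l) \<longleftrightarrow> s / l \<le> (p / v) powr (1/l)"
    using assms by (simp add: field_simps)
  also have "\<dots> \<longleftrightarrow> (s / l) powr l \<le> p / v"
    using assms by (intro le_powr_inverse_iff) auto
  also have "\<dots> \<longleftrightarrow> v \<le> p * (l / s) powr l"
    using assms by (simp add: powr_divide field_simps)
  finally show ?thesis .
qed

lemma tail_pareto_rate_identity:
  fixes l p q d :: real
  assumes "0 < l" "0 < p" "0 < q" "0 < d"
  shows "l / d * ((q / p) powr (- 1 / l) - 1) = l * (p / (d powr l * q)) powr (1/l) - l / d"
proof -
  have "(q / p) powr (- 1 / l) = (p / q) powr (1 / l)"
    using assms by (simp add: powr_divide powr_minus_divide divide_simps)
  moreover have "(p / (d powr l * q)) powr (1/l) = (p / q) powr (1/l) / d"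
    using assms by (simp add: powr_divide powr_mult powr_powr)
  ultimately show ?thesis using assms by (simp add: field_simps)
qed

text \<open>
  \<open>rate_of_level l p\<close> extends \<open>v \<mapsto> l (p / v)\<^sup>1\<^sup>/\<^sup>l\<close> antitonically to all of \<open>ereal\<close>, and
  \<open>level_of_rate l p\<close> is its adjoint: the two form an antitone Galois connection.
\<close>
definition rate_of_level :: "real \<Rightarrow> real \<Rightarrow> ereal \<Rightarrow> ereal" where
  "rate_of_level l p v =
     (if v \<le> 0 then \<infinity> else if v = \<infinity> then 0 else ereal (l * (p / real_of_ereal v) powr (1/l)))"

definition level_of_rate :: "real \<Rightarrow> real \<Rightarrow> ereal \<Rightarrow> ereal" where
  "level_of_rate l p s =
     (if s \<le> 0 then \<infinity> else if s = \<infinity> then 0 else ereal (p * (l / real_of_ereal s) powr l))"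

lemma level_of_rate_nonneg: "0 < p \<Longrightarrow> 0 \<le> level_of_rate l p s"
  by (simp add: level_of_rate_def)

lemma le_rate_of_level_iff:
  assumes "0 < l" "0 < p"
  shows "s \<le> rate_of_level l p v \<longleftrightarrow> v \<le> level_of_rate l p s"
proof (cases "v \<le> 0 \<or> v = \<infinity>")
  case True
  then show ?thesis
    using level_of_rate_nonneg[OF assms(2), of l s] assms
    by (auto simp: rate_of_level_def level_of_rate_def intro: order.trans)
next
  case False
  then obtain w where w: "v = ereal w" "0 < w" by (cases v) auto
  show ?thesis
  proof (cases "s \<le> 0 \<or> s = \<infinity>")
    case True
    then show ?thesis using w assms
      by (auto simp: rate_of_level_def level_of_rate_def intro: order.trans)
  next
    case False
    then obtain r where r: "s = ereal r" "0 < r" by (cases s) auto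
    show ?thesis
      using w r le_pareto_rate_iff[OF assms w(2) r(2)] by (simp add: rate_of_level_def level_of_rate_def)
  qed
qed

lemma rate_of_level_le_iff:
  assumes "0 < l" "0 < p" "0 < w"
  shows "rate_of_level l p (ereal w) \<le> s \<longleftrightarrow> level_of_rate l p s \<le> ereal w"
proof (cases "s \<le> 0")
  case True
  moreover have "0 < rate_of_level l p (ereal w)" using assms by (simp add: rate_of_level_def)
  ultimately show ?thesis using assms by (auto simp: level_of_rate_def)
next
  case False
  show ?thesis
  proof (cases "s = \<infinity>")
    case True
    then show ?thesis using assms by (auto simp: rate_of_level_def level_of_rate_def)
  next
    case False
    with \<open>\<not> s \<le> 0\<close> obtain r where r: "s = ereal r" "0 < r" by (cases s) auto
    show ?thesis
      using r assms pareto_rate_le_iff[OF assms r(2)] by (simp add: rate_of_level_def level_of_rate_def)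
  qed
qed

lemma rate_of_level_antimono:
  assumes "0 < l" "0 < p" "v1 \<le> v2"
  shows "rate_of_level l p v2 \<le> rate_of_level l p v1"
  using le_rate_of_level_iff[OF assms(1,2)] assms(3) order.trans by blast

lemma measurable_rate_of_level [measurable]:
  "(\<lambda>x. rate_of_level l (f x) (g x)) \<in> borel_measurable M"
  if [measurable]: "f \<in> borel_measurable M" "g \<in> borel_measurable M"
  unfolding rate_of_level_def by measurable

lemma measurable_level_of_rate [measurable]:
  "(\<lambda>x. level_of_rate l (f x) (g x)) \<in> borel_measurable M"
  if [measurable]: "f \<in> borel_measurable M" "g \<in> borel_measurable M"
  unfolding level_of_rate_def by measurable

lemma scaled_powr_le_powr_diff:
  fixes lam t a T :: real
  assumes "0 < lam" "0 \<le> t" "0 < a" "a \<le> T" "t < a"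
  shows "((a - t) / a) powr lam * T powr lam \<le> (T - t) powr lam"
proof -
  have "(a - t) * T \<le> (T - t) * a" using assms by (simp add: algebra_simps mult_right_mono)
  then have "(a - t) / a * T \<le> T - t" using assms by (simp add: field_simps)
  moreover have "0 \<le> (a - t) / a * T" using assms by auto
  ultimately have "((a - t) / a * T) powr lam \<le> (T - t) powr lam"
    using assms by (intro powr_mono2) auto
  moreover have "((a - t) / a * T) powr lam = ((a - t) / a) powr lam * T powr lam"
    using assms by (subst powr_mult) auto
  ultimately show ?thesis by simp
qed

lemma Liminf_less_top_imp_frequently_bounded:
  fixes g :: "real \<Rightarrow> ereal"
  assumes "Liminf at_top g < \<infinity>"
  obtains B where "\<And>x. \<exists>T\<ge>x. g T < ereal B"
proof -
  obtain B where B: "Liminf at_top g < ereal B"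
  proof (cases "Liminf at_top g")
    case (real r)
    then show ?thesis by (intro that[of "r + 1"]) simp
  qed (use assms that[of 0] in auto)
  show ?thesis
  proof (rule that)
    fix x
    have "(INF T\<in>{x..}. g T) \<le> Liminf at_top g"
      unfolding Liminf_def atLeast_def by (rule SUP_upper) (auto simp: eventually_ge_at_top)
    with B have "(INF T\<in>{x..}. g T) < ereal B" by simp
    then show "\<exists>T\<ge>x. g T < ereal B" by (auto simp: INF_less_iff)
  qed
qed

lemma Liminf_pos_imp_tail_INF_pos:
  fixes g :: "real \<Rightarrow> ereal"
  assumes "0 < Liminf at_top g"
  obtains x where "0 < (INF T\<in>{x..}. g T)"
proof -
  from assms obtain P where P: "eventually P at_top" and pos: "0 < (INF T\<in>Collect P. g T)"
    unfolding Liminf_def by (auto simp: less_SUP_iff)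
  from P obtain x where x: "\<And>T. x \<le> T \<Longrightarrow> P T" by (auto simp: eventually_at_top_linorder)
  have "(INF T\<in>Collect P. g T) \<le> (INF T\<in>{x..}. g T)"
    using x by (intro INF_superset_mono) auto
  with pos show ?thesis by (intro that[of x]) auto
qed

lemma ereal_le_if_le_add_inverse_Suc:
  fixes a b :: ereal
  assumes "\<And>k::nat. a \<le> b + ereal (inverse (real (Suc k)))"
  shows "a \<le> b"
proof (rule ereal_le_epsilon2)
  fix e :: real assume "0 < e"
  then obtain k where "inverse (real (Suc k)) < e" using reals_Archimedean by blast
  then have "b + ereal (inverse (real (Suc k))) \<le> b + ereal e" by (intro add_left_mono) simp
  with assms[of k] show "a \<le> b + ereal e" by (rule order.trans)
qed

lemma e2ennreal_eq_top_iff: "e2ennreal x = top \<longleftrightarrow> x = \<infinity>"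
  by (cases x) (auto simp: e2ennreal_neg)

section \<open>The essential lower limit of the weighted bond prices\<close>

locale tail_pareto_setting =
  fixes M :: "'a measure" and F :: "real \<Rightarrow> 'a measure"
    and \<pi> :: "real \<Rightarrow> 'a \<Rightarrow> real" and lam :: real
  assumes prob: "prob_space M" and filt: "filtration_on M F"
    and pk: "pricing_kernel M F \<pi>" and lam: "lam > 0"
    and atp: "asymptotically_tail_pareto M \<pi> lam"
begin

interpretation P: prob_space M by (rule prob)

lemma F_subalgebra: "t \<ge> 0 \<Longrightarrow> subalgebra M (F t)"
  using filt by (simp add: filtration_on_def)

lemma F_subalgebra_mono: "0 \<le> s \<Longrightarrow> s \<le> t \<Longrightarrow> subalgebra (F t) (F s)"
  using filt F_subalgebra[of s] F_subalgebra[of t] by (simp add: filtration_on_def subalgebra_def)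

lemma F_sigma_finite: "t \<ge> 0 \<Longrightarrow> sigma_finite_subalgebra M (F t)"
  by (rule finite_measure_subalgebra_is_sigma_finite)
     (simp add: finite_measure_subalgebra_def finite_measure_subalgebra_axioms_def F_subalgebra P.finite_measure_axioms)

lemma pi_adapted: "T \<ge> 0 \<Longrightarrow> \<pi> T \<in> borel_measurable (F T)"
  using pk by (simp add: pricing_kernel_def adapted_def)

lemma pi_measurable[measurable]: "T \<ge> 0 \<Longrightarrow> \<pi> T \<in> borel_measurable M"
  using measurable_from_subalg[OF F_subalgebra pi_adapted] .

lemma pi_integrable: "T \<ge> 0 \<Longrightarrow> integrable M (\<pi> T)"
  using pk by (simp add: pricing_kernel_def)

lemma pi_pos: "T \<ge> 0 \<Longrightarrow> AE \<omega> in M. \<pi> T \<omega> > 0"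
  using pk by (simp add: pricing_kernel_def)

text \<open>
  \<open>cond_pi t T\<close> is \<open>\<pi>\<^sub>t P\<^sub>t\<^sub>T\<close>, and \<open>Theta t\<close> is the essential lower limit of the weighted
  prices \<open>weighted t T = (T - t)\<^sup>\<lambda> \<pi>\<^sub>t P\<^sub>t\<^sub>T\<close> as \<open>T \<rightarrow> \<infinity>\<close>.
\<close>
definition cond_pi :: "real \<Rightarrow> real \<Rightarrow> 'a \<Rightarrow> real" where
  "cond_pi t T = real_cond_exp M (F t) (\<pi> T)"
definition weighted :: "real \<Rightarrow> real \<Rightarrow> 'a \<Rightarrow> ereal" where
  "weighted t T \<omega> = ereal ((T - t) powr lam * cond_pi t T \<omega>)"
definition horizon :: "real \<Rightarrow> real \<Rightarrow> real set" where
  "horizon t x = {T\<in>{t<..}. x \<le> T}"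
definition tail_inf :: "real \<Rightarrow> real \<Rightarrow> 'a \<Rightarrow> ereal" where
  "tail_inf t x = ess_inf_fam M (F t) (horizon t x) (weighted t)"
definition Theta :: "real \<Rightarrow> 'a \<Rightarrow> ereal" where
  "Theta t = ess_sup_fam M (F t) UNIV (tail_inf t)"
definition theta :: "real \<Rightarrow> 'a \<Rightarrow> real" where
  "theta t \<omega> = real_of_ereal (Theta t \<omega>)"
definition tail_inf_real :: "real \<Rightarrow> nat \<Rightarrow> 'a \<Rightarrow> real" where
  "tail_inf_real t n \<omega> = real_of_ereal (tail_inf t (real n) \<omega>)"

lemma cond_pi_measurable_F[measurable]: "cond_pi t T \<in> borel_measurable (F t)"
  by (simp add: cond_pi_def)

lemma cond_pi_pos: "0 \<le> t \<Longrightarrow> 0 \<le> T \<Longrightarrow> AE \<omega> in M. cond_pi t T \<omega> > 0"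
proof -
  assume "0 \<le> t" "0 \<le> T"
  interpret Fs: sigma_finite_subalgebra M "F t" by (rule F_sigma_finite) fact
  show ?thesis unfolding cond_pi_def
    by (rule Fs.real_cond_exp_gr_c) (use pi_integrable pi_pos \<open>0 \<le> T\<close> in auto)
qed

lemma cond_pi_integrable: "0 \<le> t \<Longrightarrow> 0 \<le> T \<Longrightarrow> integrable M (cond_pi t T)"
proof -
  assume "0 \<le> t" "0 \<le> T"
  interpret Fs: sigma_finite_subalgebra M "F t" by (rule F_sigma_finite) fact
  show ?thesis unfolding cond_pi_def using Fs.real_cond_exp_int(1) pi_integrable \<open>0 \<le> T\<close> by auto
qed

lemma integral_cond_pi: "0 \<le> t \<Longrightarrow> 0 \<le> T \<Longrightarrow> (\<integral>\<omega>. cond_pi t T \<omega> \<partial>M) = (\<integral>\<omega>. \<pi> T \<omega> \<partial>M)"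
proof -
  assume "0 \<le> t" "0 \<le> T"
  interpret Fs: sigma_finite_subalgebra M "F t" by (rule F_sigma_finite) fact
  show ?thesis unfolding cond_pi_def using Fs.real_cond_exp_int(2) pi_integrable \<open>0 \<le> T\<close> by auto
qed

lemma weighted_measurable_F[measurable]: "weighted t T \<in> borel_measurable (F t)"
  unfolding weighted_def by measurable

lemma weighted_nonneg:
  assumes "0 \<le> t" "0 \<le> T" shows "AE \<omega> in M. 0 \<le> weighted t T \<omega>"
  using cond_pi_pos[OF assms] by eventually_elim (auto simp: weighted_def)

text \<open>
  The pathwise infimum of \<open>T\<^sup>\<lambda> \<pi>\<^sub>T\<close> over the uncountably many \<open>T \<ge> a\<close> need not be
  measurable; an essential infimum, attained along countably many \<open>T\<close>, is a measurable
  minorant that still dominates it.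
\<close>
lemma tail_floor_exists:
  assumes "0 \<le> a"
  shows "\<exists>y. y \<in> borel_measurable M \<and> (AE \<omega> in M. 0 \<le> y \<omega>) \<and>
    (\<forall>T\<ge>a. AE \<omega> in M. y \<omega> \<le> T powr lam * \<pi> T \<omega>) \<and>
    (AE \<omega> in M. (INF T\<in>{a..}. ereal (T powr lam * \<pi> T \<omega>)) \<le> ereal (y \<omega>))"
proof -
  define G where "G T \<omega> = ereal (T powr lam * \<pi> T \<omega>)" for T \<omega>
  have G_meas: "G T \<in> borel_measurable M" if "T \<in> {a..}" for T
    using assms that unfolding G_def by (intro borel_measurable_ereal borel_measurable_times) auto
  have "subalgebra M M" by (simp add: subalgebra_def)
  then obtain J where J: "countable J" "J \<subseteq> {a..}"
    and ess_inf: "is_ess_inf_fam M M {a..} G (\<lambda>\<omega>. INF j\<in>J. G j \<omega>)"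
    by (rule is_ess_inf_fam_countable_INF[OF prob _ G_meas])
  have G_nonneg: "AE \<omega> in M. \<forall>j\<in>J. 0 \<le> G j \<omega>"
  proof (subst AE_ball_countable[OF J(1)], intro ballI)
    fix j assume "j \<in> J"
    then have "0 \<le> j" using J(2) assms by auto
    then show "AE \<omega> in M. 0 \<le> G j \<omega>"
      using pi_pos[of j] by (auto simp: G_def elim!: eventually_mono)
  qed
  have INF_le: "AE \<omega> in M. (INF j\<in>J. G j \<omega>) \<le> G T \<omega>" if "a \<le> T" for T
    using ess_inf that by (simp add: is_ess_inf_fam_def)
  define y where "y \<omega> = real_of_ereal (INF j\<in>J. G j \<omega>)" for \<omega>
  have y_eq: "AE \<omega> in M. (INF j\<in>J. G j \<omega>) = ereal (y \<omega>) \<and> 0 \<le> y \<omega>"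
    using G_nonneg INF_le[OF order_refl]
  proof eventually_elim
    case (elim \<omega>)
    then have "0 \<le> (INF j\<in>J. G j \<omega>)" by (auto intro: INF_greatest)
    with elim show ?case by (cases "INF j\<in>J. G j \<omega>") (auto simp: y_def G_def)
  qed
  show ?thesis
  proof (intro exI conjI allI impI)
    have "(\<lambda>\<omega>. INF j\<in>J. G j \<omega>) \<in> borel_measurable M"
      using ess_inf by (simp add: is_ess_inf_fam_def)
    then show "y \<in> borel_measurable M"
      unfolding y_def[abs_def] by (rule borel_measurable_real_of_ereal)
    show "AE \<omega> in M. 0 \<le> y \<omega>" using y_eq by eventually_elim simp
    show "AE \<omega> in M. y \<omega> \<le> T powr lam * \<pi> T \<omega>" if "a \<le> T" for T
      using y_eq INF_le[OF that] by eventually_elim (auto simp: G_def)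
    show "AE \<omega> in M. (INF T\<in>{a..}. ereal (T powr lam * \<pi> T \<omega>)) \<le> ereal (y \<omega>)"
      using y_eq
    proof eventually_elim
      case (elim \<omega>)
      have "(INF T\<in>{a..}. G T \<omega>) \<le> (INF j\<in>J. G j \<omega>)" using J(2) by (rule INF_superset_mono) simp
      with elim show ?case by (simp add: G_def)
    qed
  qed
qed

definition tail_floor :: "real \<Rightarrow> 'a \<Rightarrow> real" where
  "tail_floor a = (SOME y. y \<in> borel_measurable M \<and> (AE \<omega> in M. 0 \<le> y \<omega>) \<and>
    (\<forall>T\<ge>a. AE \<omega> in M. y \<omega> \<le> T powr lam * \<pi> T \<omega>) \<and>
    (AE \<omega> in M. (INF T\<in>{a..}. ereal (T powr lam * \<pi> T \<omega>)) \<le> ereal (y \<omega>)))"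

lemma tail_floor_spec:
  assumes "0 \<le> a"
  shows "tail_floor a \<in> borel_measurable M" "AE \<omega> in M. 0 \<le> tail_floor a \<omega>"
    and "\<And>T. a \<le> T \<Longrightarrow> AE \<omega> in M. tail_floor a \<omega> \<le> T powr lam * \<pi> T \<omega>"
    and "AE \<omega> in M. (INF T\<in>{a..}. ereal (T powr lam * \<pi> T \<omega>)) \<le> ereal (tail_floor a \<omega>)"
proof -
  have "tail_floor a \<in> borel_measurable M \<and> (AE \<omega> in M. 0 \<le> tail_floor a \<omega>) \<and>
    (\<forall>T\<ge>a. AE \<omega> in M. tail_floor a \<omega> \<le> T powr lam * \<pi> T \<omega>) \<and>
    (AE \<omega> in M. (INF T\<in>{a..}. ereal (T powr lam * \<pi> T \<omega>)) \<le> ereal (tail_floor a \<omega>))"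
    unfolding tail_floor_def by (rule someI_ex[OF tail_floor_exists[OF assms]])
  then show "tail_floor a \<in> borel_measurable M" "AE \<omega> in M. 0 \<le> tail_floor a \<omega>"
    and "\<And>T. a \<le> T \<Longrightarrow> AE \<omega> in M. tail_floor a \<omega> \<le> T powr lam * \<pi> T \<omega>"
    and "AE \<omega> in M. (INF T\<in>{a..}. ereal (T powr lam * \<pi> T \<omega>)) \<le> ereal (tail_floor a \<omega>)"
    by blast+
qed

context
  fixes t :: real
  assumes t: "0 \<le> t"
begin

lemma pi_measurable_F[measurable]: "\<pi> t \<in> borel_measurable (F t)"
  using pi_adapted[OF t] .

lemma is_ess_inf_fam_tail_inf: "is_ess_inf_fam M (F t) (horizon t x) (weighted t) (tail_inf t x)"
  unfolding tail_inf_def by (rule is_ess_inf_fam_ess_inf_fam[OF prob F_subalgebra[OF t]]) simp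

lemma tail_inf_measurable_F[measurable]: "tail_inf t x \<in> borel_measurable (F t)"
  using is_ess_inf_fam_tail_inf by (simp add: is_ess_inf_fam_def)

lemma tail_inf_measurable[measurable]: "tail_inf t x \<in> borel_measurable M"
  using measurable_from_subalg[OF F_subalgebra[OF t] tail_inf_measurable_F] .

lemma tail_inf_le: "T \<in> horizon t x \<Longrightarrow> AE \<omega> in M. tail_inf t x \<omega> \<le> weighted t T \<omega>"
  using is_ess_inf_fam_tail_inf by (simp add: is_ess_inf_fam_def)

lemma tail_inf_greatest: "h \<in> borel_measurable (F t) \<Longrightarrow> (\<And>T. T \<in> horizon t x \<Longrightarrow> AE \<omega> in M. h \<omega> \<le> weighted t T \<omega>)
   \<Longrightarrow> AE \<omega> in M. h \<omega> \<le> tail_inf t x \<omega>"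
  using is_ess_inf_fam_tail_inf by (simp add: is_ess_inf_fam_def)

lemma tail_inf_nonneg: "AE \<omega> in M. 0 \<le> tail_inf t x \<omega>"
  by (rule tail_inf_greatest) (use weighted_nonneg t in \<open>auto simp: horizon_def\<close>)

lemma tail_inf_mono: "x \<le> y \<Longrightarrow> AE \<omega> in M. tail_inf t x \<omega> \<le> tail_inf t y \<omega>"
  by (rule tail_inf_greatest) (auto intro: tail_inf_le simp: horizon_def)

lemma is_ess_sup_fam_Theta: "is_ess_sup_fam M (F t) UNIV (tail_inf t) (Theta t)"
  unfolding Theta_def by (rule is_ess_sup_fam_ess_sup_fam[OF prob F_subalgebra[OF t]]) simp

lemma Theta_measurable_F[measurable]: "Theta t \<in> borel_measurable (F t)"
  using is_ess_sup_fam_Theta by (simp add: is_ess_sup_fam_def)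

lemma Theta_measurable[measurable]: "Theta t \<in> borel_measurable M"
  using measurable_from_subalg[OF F_subalgebra[OF t] Theta_measurable_F] .

lemma tail_inf_le_Theta: "AE \<omega> in M. tail_inf t x \<omega> \<le> Theta t \<omega>"
  using is_ess_sup_fam_Theta by (simp add: is_ess_sup_fam_def)

lemma Theta_least: "h \<in> borel_measurable (F t) \<Longrightarrow> (\<And>x. AE \<omega> in M. tail_inf t x \<omega> \<le> h \<omega>)
   \<Longrightarrow> AE \<omega> in M. Theta t \<omega> \<le> h \<omega>"
  using is_ess_sup_fam_Theta by (simp add: is_ess_sup_fam_def)

lemma Theta_eq_SUP: "AE \<omega> in M. Theta t \<omega> = (SUP n. tail_inf t (real n) \<omega>)"
proof -
  have le1: "AE \<omega> in M. Theta t \<omega> \<le> (SUP n. tail_inf t (real n) \<omega>)"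
  proof (rule Theta_least)
    fix x
    obtain n :: nat where "x \<le> real n" using real_arch_simple by blast
    from tail_inf_mono[OF this] show "AE \<omega> in M. tail_inf t x \<omega> \<le> (SUP n. tail_inf t (real n) \<omega>)"
      by eventually_elim (auto intro: SUP_upper2)
  qed measurable
  have "AE \<omega> in M. \<forall>n. tail_inf t (real n) \<omega> \<le> Theta t \<omega>"
    using tail_inf_le_Theta by (simp add: AE_all_countable)
  then have le2: "AE \<omega> in M. (SUP n. tail_inf t (real n) \<omega>) \<le> Theta t \<omega>"
    by eventually_elim (auto intro: SUP_least)
  from le1 le2 show ?thesis by eventually_elim auto
qed

lemma incseq_tail_inf: "AE \<omega> in M. incseq (\<lambda>n. tail_inf t (real n) \<omega>)"
proof -
  have "AE \<omega> in M. \<forall>n. tail_inf t (real n) \<omega> \<le> tail_inf t (real (Suc n)) \<omega>"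
    using tail_inf_mono by (simp add: AE_all_countable)
  then show ?thesis by eventually_elim (rule incseq_SucI, auto)
qed

lemma nn_integral_tail_inf_le:
  assumes T: "T \<in> horizon t x"
  shows "(\<integral>\<^sup>+\<omega>. e2ennreal (tail_inf t x \<omega>) \<partial>M) \<le> ennreal (\<integral>\<omega>. T powr lam * \<pi> T \<omega> \<partial>M)"
proof -
  have T0: "0 \<le> T" "t < T" using T t by (auto simp: horizon_def)
  have "AE \<omega> in M. e2ennreal (tail_inf t x \<omega>) \<le> ennreal ((T - t) powr lam * cond_pi t T \<omega>)"
    using tail_inf_le[OF T] by eventually_elim (drule e2ennreal_mono, simp add: weighted_def)
  then have "(\<integral>\<^sup>+\<omega>. e2ennreal (tail_inf t x \<omega>) \<partial>M) \<le> (\<integral>\<^sup>+\<omega>. ennreal ((T - t) powr lam * cond_pi t T \<omega>) \<partial>M)"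
    by (rule nn_integral_mono_AE)
  also have "\<dots> = ennreal (\<integral>\<omega>. (T - t) powr lam * cond_pi t T \<omega> \<partial>M)"
    using cond_pi_integrable[OF t T0(1)] cond_pi_pos[OF t T0(1)]
    by (intro nn_integral_eq_integral) (auto elim!: eventually_mono)
  also have "(\<integral>\<omega>. (T - t) powr lam * cond_pi t T \<omega> \<partial>M) = (T - t) powr lam * (\<integral>\<omega>. \<pi> T \<omega> \<partial>M)"
    using integral_cond_pi[OF t T0(1)] by simp
  also have "\<dots> \<le> T powr lam * (\<integral>\<omega>. \<pi> T \<omega> \<partial>M)"
  proof (rule mult_right_mono)
    show "(T - t) powr lam \<le> T powr lam" using T0 t lam by (intro powr_mono2) auto
    show "0 \<le> (\<integral>\<omega>. \<pi> T \<omega> \<partial>M)"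
      using pi_pos[OF T0(1)] by (intro integral_nonneg_AE) (auto elim!: eventually_mono)
  qed
  finally show ?thesis by (simp add: ennreal_leI)
qed

lemma nn_integral_Theta_less_top: "(\<integral>\<^sup>+\<omega>. e2ennreal (Theta t \<omega>) \<partial>M) < \<infinity>"
proof -
  have "Liminf at_top (\<lambda>T. ereal (\<integral>\<omega>. T powr lam * \<pi> T \<omega> \<partial>M)) < \<infinity>"
    using atp by (simp add: asymptotically_tail_pareto_def)
  then obtain B where B: "\<And>x. \<exists>T\<ge>x. (\<integral>\<omega>. T powr lam * \<pi> T \<omega> \<partial>M) < B"
    by (rule Liminf_less_top_imp_frequently_bounded) (simp only: less_ereal.simps(1), blast)
  have "AE \<omega> in M. e2ennreal (Theta t \<omega>) = (SUP n. e2ennreal (tail_inf t (real n) \<omega>))"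
    using Theta_eq_SUP incseq_tail_inf
  proof eventually_elim
    case (elim \<omega>)
    then show ?case
      using sup_continuousD[OF sup_continuous_e2ennreal[OF sup_continuous_id], of "\<lambda>n. tail_inf t (real n) \<omega>"]
      by (simp add: mono_iff_le_Suc incseq_Suc_iff)
  qed
  then have "(\<integral>\<^sup>+\<omega>. e2ennreal (Theta t \<omega>) \<partial>M) = (\<integral>\<^sup>+\<omega>. (SUP n. e2ennreal (tail_inf t (real n) \<omega>)) \<partial>M)"
    by (rule nn_integral_cong_AE)
  also have "\<dots> = (SUP n. \<integral>\<^sup>+\<omega>. e2ennreal (tail_inf t (real n) \<omega>) \<partial>M)"
  proof (rule nn_integral_monotone_convergence_SUP_AE)
    fix n
    show "AE \<omega> in M. e2ennreal (tail_inf t (real n) \<omega>) \<le> e2ennreal (tail_inf t (real (Suc n)) \<omega>)"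
      using tail_inf_mono[of "real n" "real (Suc n)"] by simp (rule eventually_mono, auto intro: e2ennreal_mono)
  qed measurable
  also have "\<dots> \<le> ennreal B"
  proof (rule SUP_least)
    fix n
    obtain T where T: "max (real n) (t + 1) \<le> T" "(\<integral>\<omega>. T powr lam * \<pi> T \<omega> \<partial>M) < B"
      using B by blast
    then have "T \<in> horizon t (real n)" by (auto simp: horizon_def)
    then have "(\<integral>\<^sup>+\<omega>. e2ennreal (tail_inf t (real n) \<omega>) \<partial>M) \<le> ennreal (\<integral>\<omega>. T powr lam * \<pi> T \<omega> \<partial>M)"
      by (rule nn_integral_tail_inf_le)
    also have "\<dots> \<le> ennreal B" using T(2) by (simp add: ennreal_leI)
    finally show "(\<integral>\<^sup>+\<omega>. e2ennreal (tail_inf t (real n) \<omega>) \<partial>M) \<le> ennreal B" .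
  qed
  finally show ?thesis by (simp add: le_less_trans)
qed

lemma Theta_finite: "AE \<omega> in M. Theta t \<omega> < \<infinity>"
proof -
  have "(\<integral>\<^sup>+\<omega>. e2ennreal (Theta t \<omega>) \<partial>M) \<noteq> \<infinity>"
    using nn_integral_Theta_less_top by simp
  then have "AE \<omega> in M. e2ennreal (Theta t \<omega>) \<noteq> \<infinity>"
    by (intro nn_integral_PInf_AE) measurable
  then show ?thesis by eventually_elim (auto simp: e2ennreal_eq_top_iff less_le)
qed

lemma Theta_nonneg: "AE \<omega> in M. 0 \<le> Theta t \<omega>"
  using tail_inf_nonneg[of 0] tail_inf_le_Theta[of 0] by eventually_elim auto

lemma Theta_eq_theta: "AE \<omega> in M. Theta t \<omega> = ereal (theta t \<omega>)"
  using Theta_finite Theta_nonneg by eventually_elim (auto simp: theta_def ereal_real)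

lemma theta_measurable_F[measurable]: "theta t \<in> borel_measurable (F t)"
  unfolding theta_def by measurable

lemma theta_measurable[measurable]: "theta t \<in> borel_measurable M"
  unfolding theta_def by measurable

lemma theta_integrable: "integrable M (theta t)"
proof (rule integrableI_nonneg)
  show "AE \<omega> in M. 0 \<le> theta t \<omega>"
    using Theta_nonneg by eventually_elim (simp add: theta_def real_of_ereal_pos)
  have "AE \<omega> in M. ennreal (theta t \<omega>) = e2ennreal (Theta t \<omega>)"
    using Theta_eq_theta by eventually_elim simp
  then have "(\<integral>\<^sup>+\<omega>. ennreal (theta t \<omega>) \<partial>M) = (\<integral>\<^sup>+\<omega>. e2ennreal (Theta t \<omega>) \<partial>M)"
    by (rule nn_integral_cong_AE)
  with nn_integral_Theta_less_top show "(\<integral>\<^sup>+\<omega>. ennreal (theta t \<omega>) \<partial>M) < \<infinity>" by simp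
qed measurable

lemma cond_exp_minorant_le_tail_inf:
  assumes y_int: "integrable M y" and a: "t < a"
    and y_le: "\<And>T. a \<le> T \<Longrightarrow> AE \<omega> in M. y \<omega> \<le> T powr lam * \<pi> T \<omega>"
  shows "AE \<omega> in M. ereal (((a - t) / a) powr lam * real_cond_exp M (F t) y \<omega>) \<le> tail_inf t a \<omega>"
proof (rule tail_inf_greatest)
  interpret Ft: sigma_finite_subalgebra M "F t" by (rule F_sigma_finite[OF t])
  show "(\<lambda>\<omega>. ereal (((a - t) / a) powr lam * real_cond_exp M (F t) y \<omega>)) \<in> borel_measurable (F t)"
    by measurable
  have a0: "0 < a" using a t by simp
  fix T assume "T \<in> horizon t a"
  then have T: "a \<le> T" "0 \<le> T" using a0 by (auto simp: horizon_def)
  have "integrable M (\<lambda>\<omega>. T powr lam * \<pi> T \<omega>)" using pi_integrable[OF T(2)] by simp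
  with y_le[OF T(1)] have "AE \<omega> in M. real_cond_exp M (F t) y \<omega> \<le>
      real_cond_exp M (F t) (\<lambda>\<omega>. T powr lam * \<pi> T \<omega>) \<omega>"
    using y_int by (intro Ft.real_cond_exp_mono)
  moreover have "AE \<omega> in M. real_cond_exp M (F t) (\<lambda>\<omega>. T powr lam * \<pi> T \<omega>) \<omega> = T powr lam * cond_pi t T \<omega>"
    unfolding cond_pi_def by (rule Ft.real_cond_exp_cmult) (rule pi_integrable[OF T(2)])
  moreover have "AE \<omega> in M. 0 < cond_pi t T \<omega>" by (rule cond_pi_pos[OF t T(2)])
  ultimately show "AE \<omega> in M. ereal (((a - t) / a) powr lam * real_cond_exp M (F t) y \<omega>) \<le> weighted t T \<omega>"
  proof eventually_elim
    case (elim \<omega>)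
    let ?k = "((a - t) / a) powr lam"
    have "?k * real_cond_exp M (F t) y \<omega> \<le> ?k * (T powr lam * cond_pi t T \<omega>)"
      using elim by (intro mult_left_mono) auto
    also have "\<dots> = (?k * T powr lam) * cond_pi t T \<omega>" by simp
    also have "\<dots> \<le> (T - t) powr lam * cond_pi t T \<omega>"
      using scaled_powr_le_powr_diff[OF lam t a0 T(1) a] elim by (intro mult_right_mono) auto
    finally show ?case by (simp add: weighted_def)
  qed
qed

lemma Theta_nonpos_imp_floor_eq_0:
  assumes [measurable]: "y \<in> borel_measurable M" and y_nonneg: "AE \<omega> in M. 0 \<le> y \<omega>"
    and a: "t < a" and y_le: "\<And>T. a \<le> T \<Longrightarrow> AE \<omega> in M. y \<omega> \<le> T powr lam * \<pi> T \<omega>"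
  shows "AE \<omega> in M. Theta t \<omega> \<le> 0 \<longrightarrow> y \<omega> = 0"
proof -
  interpret Ft: sigma_finite_subalgebra M "F t" by (rule F_sigma_finite[OF t])
  have a0: "0 < a" using a t by simp
  have y_int: "integrable M y"
  proof (rule Bochner_Integration.integrable_bound)
    show "integrable M (\<lambda>\<omega>. a powr lam * \<pi> a \<omega>)" using pi_integrable[of a] a0 by simp
    show "AE \<omega> in M. norm (y \<omega>) \<le> norm (a powr lam * \<pi> a \<omega>)"
      using y_le[OF order_refl] y_nonneg by eventually_elim auto
  qed measurable
  define A where "A = {\<omega>\<in>space M. Theta t \<omega> \<le> 0}"
  have "space (F t) = space M" using F_subalgebra[OF t] by (simp add: subalgebra_def)
  moreover have "{\<omega>\<in>space (F t). Theta t \<omega> \<le> 0} \<in> sets (F t)" by measurable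
  ultimately have A: "A \<in> sets (F t)" by (simp add: A_def)
  have k: "0 < ((a - t) / a) powr lam" using a a0 by simp
  have "AE \<omega> in M. ereal (((a - t) / a) powr lam * real_cond_exp M (F t) y \<omega>) \<le> tail_inf t a \<omega>"
    by (rule cond_exp_minorant_le_tail_inf[OF y_int a]) (rule y_le)
  then have "AE \<omega> in M. \<omega> \<in> A \<longrightarrow> real_cond_exp M (F t) y \<omega> \<le> 0"
    using tail_inf_le_Theta[of a]
  proof eventually_elim
    case (elim \<omega>)
    show ?case
    proof
      assume "\<omega> \<in> A"
      then have "Theta t \<omega> \<le> 0" by (simp add: A_def)
      with elim have "ereal (((a - t) / a) powr lam * real_cond_exp M (F t) y \<omega>) \<le> 0"
        by (meson order.trans)
      with k show "real_cond_exp M (F t) y \<omega> \<le> 0" by (simp add: mult_le_0_iff)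
    qed
  qed
  from Ft.AE_eq_0_on_if_real_cond_exp_nonpos[OF y_int y_nonneg A this]
  show ?thesis using AE_space by eventually_elim (auto simp: A_def)
qed

lemma Theta_pos: "AE \<omega> in M. 0 < Theta t \<omega>"
proof -
  define a where "a n = max (real n) (t + 1)" for n :: nat
  have a: "0 \<le> a n" "t < a n" "real n \<le> a n" for n using t by (auto simp: a_def)
  have "AE \<omega> in M. Theta t \<omega> \<le> 0 \<longrightarrow> tail_floor (a n) \<omega> = 0" for n
    by (rule Theta_nonpos_imp_floor_eq_0[OF tail_floor_spec(1,2)[OF a(1)] a(2) tail_floor_spec(3)[OF a(1)]])
  then have "AE \<omega> in M. \<forall>n. Theta t \<omega> \<le> 0 \<longrightarrow> tail_floor (a n) \<omega> = 0"
    unfolding AE_all_countable by blast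
  moreover have "AE \<omega> in M. \<forall>n.
      (INF T\<in>{a n..}. ereal (T powr lam * \<pi> T \<omega>)) \<le> ereal (tail_floor (a n) \<omega>)"
    unfolding AE_all_countable using tail_floor_spec(4)[OF a(1)] by blast
  moreover have "AE \<omega> in M. 0 < Liminf at_top (\<lambda>T. ereal (T powr lam * \<pi> T \<omega>))"
    using atp by (simp add: asymptotically_tail_pareto_def)
  ultimately show ?thesis
  proof eventually_elim
    case (elim \<omega>)
    obtain x where x: "0 < (INF T\<in>{x..}. ereal (T powr lam * \<pi> T \<omega>))"
      using Liminf_pos_imp_tail_INF_pos[OF elim(3)] by blast
    obtain n :: nat where n: "x \<le> real n" using real_arch_simple by blast
    note x
    also have "(INF T\<in>{x..}. ereal (T powr lam * \<pi> T \<omega>)) \<le> (INF T\<in>{a n..}. ereal (T powr lam * \<pi> T \<omega>))"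
      using n a(3)[of n] by (intro INF_superset_mono) auto
    also have "\<dots> \<le> ereal (tail_floor (a n) \<omega>)"
      using elim(2) by blast
    finally have "tail_floor (a n) \<omega> \<noteq> 0" by auto
    then show ?case using elim(1) not_less by blast
  qed
qed

lemma cond_pi_pos_of_less: "t < T \<Longrightarrow> AE \<omega> in M. cond_pi t T \<omega> > 0"
  using cond_pi_pos[OF t, of T] t by simp

definition rate :: "real \<Rightarrow> 'a \<Rightarrow> ereal" where
  "rate T \<omega> = ereal (tail_pareto_rate M F \<pi> lam t T \<omega>)"

lemma rate_measurable_F[measurable]: "rate T \<in> borel_measurable (F t)"
  unfolding rate_def tail_pareto_rate_def bond_price_def by measurable

lemma rate_add_eq_rate_of_weighted:
  assumes T: "t < T"
  shows "AE \<omega> in M. rate T \<omega> + ereal (lam / (T - t)) = rate_of_level lam (\<pi> t \<omega>) (weighted t T \<omega>)"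
  using cond_pi_pos_of_less[OF T] pi_pos[OF t]
proof eventually_elim
  case (elim \<omega>)
  have d: "0 < T - t" using T by simp
  have "0 < (T - t) powr lam * cond_pi t T \<omega>" using elim d by simp
  then show ?case
    using tail_pareto_rate_identity[OF lam elim(2) elim(1) d]
    by (simp add: rate_def tail_pareto_rate_def bond_price_def weighted_def rate_of_level_def cond_pi_def)
qed

definition tail_sup :: "real \<Rightarrow> 'a \<Rightarrow> ereal" where
  "tail_sup x = ess_sup_fam M (F t) (horizon t x) rate"

lemma is_ess_sup_fam_tail_sup: "is_ess_sup_fam M (F t) (horizon t x) rate (tail_sup x)"
  unfolding tail_sup_def by (rule is_ess_sup_fam_ess_sup_fam[OF prob F_subalgebra[OF t]]) simp

lemma tail_sup_measurable_F[measurable]: "tail_sup x \<in> borel_measurable (F t)"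
  using is_ess_sup_fam_tail_sup by (simp add: is_ess_sup_fam_def)

lemma rate_le_tail_sup: "T \<in> horizon t x \<Longrightarrow> AE \<omega> in M. rate T \<omega> \<le> tail_sup x \<omega>"
  using is_ess_sup_fam_tail_sup by (simp add: is_ess_sup_fam_def)

lemma tail_sup_least: "h \<in> borel_measurable (F t) \<Longrightarrow> (\<And>T. T \<in> horizon t x \<Longrightarrow> AE \<omega> in M. rate T \<omega> \<le> h \<omega>)
   \<Longrightarrow> AE \<omega> in M. tail_sup x \<omega> \<le> h \<omega>"
  using is_ess_sup_fam_tail_sup by (simp add: is_ess_sup_fam_def)

lemma tail_sup_antimono: "x \<le> y \<Longrightarrow> AE \<omega> in M. tail_sup y \<omega> \<le> tail_sup x \<omega>"
  by (rule tail_sup_least) (auto intro: rate_le_tail_sup simp: horizon_def)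

lemma rate_le_rate_of_weighted:
  assumes T: "t < T"
  shows "AE \<omega> in M. rate T \<omega> \<le> rate_of_level lam (\<pi> t \<omega>) (weighted t T \<omega>)"
  using rate_add_eq_rate_of_weighted[OF T]
proof eventually_elim
  case (elim \<omega>)
  have "rate T \<omega> \<le> rate T \<omega> + ereal (lam / (T - t))"
    using T lam by (intro ereal_le_add_self) auto
  then show ?case using elim by simp
qed

lemma tail_sup_le_rate_of_tail_inf: "AE \<omega> in M. tail_sup x \<omega> \<le> rate_of_level lam (\<pi> t \<omega>) (tail_inf t x \<omega>)"
proof (rule tail_sup_least)
  fix T assume TI: "T \<in> horizon t x"
  then have T: "t < T" by (simp add: horizon_def)
  show "AE \<omega> in M. rate T \<omega> \<le> rate_of_level lam (\<pi> t \<omega>) (tail_inf t x \<omega>)"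
    using rate_le_rate_of_weighted[OF T] tail_inf_le[OF TI] pi_pos[OF t]
  proof eventually_elim
    case (elim \<omega>)
    show ?case using order.trans[OF elim(1) rate_of_level_antimono[OF lam elim(3) elim(2)]] .
  qed
qed measurable

definition long_rate :: "'a \<Rightarrow> ereal" where
  "long_rate \<omega> = ereal (lam * (\<pi> t \<omega> / theta t \<omega>) powr (1 / lam))"

lemma long_rate_measurable_F[measurable]: "long_rate \<in> borel_measurable (F t)"
  unfolding long_rate_def by measurable

lemma theta_pos: "AE \<omega> in M. 0 < theta t \<omega>"
  using Theta_pos Theta_eq_theta by eventually_elim simp

lemma long_rate_eq: "AE \<omega> in M. long_rate \<omega> = rate_of_level lam (\<pi> t \<omega>) (Theta t \<omega>)"
  using Theta_eq_theta theta_pos by eventually_elim (simp add: long_rate_def rate_of_level_def)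

lemma level_of_rate_tail_sup_le_tail_inf:
  assumes d: "\<And>T. T \<in> horizon t y \<Longrightarrow> lam / (T - t) \<le> d"
  shows "AE \<omega> in M. level_of_rate lam (\<pi> t \<omega>) (tail_sup y \<omega> + ereal d) \<le> tail_inf t y \<omega>"
proof (rule tail_inf_greatest)
  fix T assume TI: "T \<in> horizon t y"
  then have T: "t < T" by (simp add: horizon_def)
  show "AE \<omega> in M. level_of_rate lam (\<pi> t \<omega>) (tail_sup y \<omega> + ereal d) \<le> weighted t T \<omega>"
    using rate_add_eq_rate_of_weighted[OF T] rate_le_tail_sup[OF TI] cond_pi_pos_of_less[OF T] pi_pos[OF t]
  proof eventually_elim
    case (elim \<omega>)
    have "rate_of_level lam (\<pi> t \<omega>) (weighted t T \<omega>) = rate T \<omega> + ereal (lam / (T - t))"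
      using elim(1) by simp
    also have "\<dots> \<le> tail_sup y \<omega> + ereal d"
      using elim(2) d[OF TI] by (intro add_mono) auto
    finally show ?case
      using elim(3,4) T rate_of_level_le_iff[OF lam elim(4), of "(T - t) powr lam * cond_pi t T \<omega>"]
      by (simp add: weighted_def)
  qed
qed measurable

lemma long_rate_le_tail_sup: "AE \<omega> in M. long_rate \<omega> \<le> tail_sup x \<omega>"
proof -
  have "AE \<omega> in M. long_rate \<omega> \<le> tail_sup x \<omega> + ereal (inverse (real (Suc k)))" for k :: nat
  proof -
    define y where "y = max x (t + lam * real (Suc k))"
    define d where "d = inverse (real (Suc k))"
    have y: "x \<le> y" by (simp add: y_def)
    have d_bound: "lam / (T - t) \<le> d" if "T \<in> horizon t y" for T
    proof -
      have "0 < lam * real (Suc k)" using lam by simp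
      moreover have "lam * real (Suc k) \<le> T - t" using that by (auto simp: y_def horizon_def)
      ultimately have "lam / (T - t) \<le> lam / (lam * real (Suc k))"
        using lam that by (intro divide_left_mono mult_pos_pos) (auto simp: horizon_def)
      then show ?thesis using lam by (simp add: d_def inverse_eq_divide)
    qed
    have "AE \<omega> in M. level_of_rate lam (\<pi> t \<omega>) (tail_sup y \<omega> + ereal d) \<le> tail_inf t y \<omega>"
      using d_bound by (rule level_of_rate_tail_sup_le_tail_inf)
    then show ?thesis
      using tail_inf_le_Theta[of y] Theta_eq_theta theta_pos pi_pos[OF t] long_rate_eq tail_sup_antimono[OF y]
    proof eventually_elim
      case (elim \<omega>)
      have "level_of_rate lam (\<pi> t \<omega>) (tail_sup y \<omega> + ereal d) \<le> ereal (theta t \<omega>)"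
        using elim by (metis order.trans)
      then have "long_rate \<omega> \<le> tail_sup y \<omega> + ereal d"
        using rate_of_level_le_iff[OF lam elim(5) elim(4)] elim by simp
      also have "\<dots> \<le> tail_sup x \<omega> + ereal d" using elim by (intro add_right_mono) auto
      finally show ?case by (simp add: d_def)
    qed
  qed
  then have "AE \<omega> in M. \<forall>k. long_rate \<omega> \<le> tail_sup x \<omega> + ereal (inverse (real (Suc k)))"
    by (simp add: AE_all_countable)
  then show ?thesis by eventually_elim (rule ereal_le_if_le_add_inverse_Suc, auto)
qed

lemma long_rate_greatest:
  assumes hN[measurable]: "h \<in> borel_measurable (F t)" and H: "\<And>x. AE \<omega> in M. h \<omega> \<le> tail_sup x \<omega>"
  shows "AE \<omega> in M. h \<omega> \<le> long_rate \<omega>"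
proof -
  have "AE \<omega> in M. Theta t \<omega> \<le> level_of_rate lam (\<pi> t \<omega>) (h \<omega>)"
  proof (rule Theta_least)
    fix x
    show "AE \<omega> in M. tail_inf t x \<omega> \<le> level_of_rate lam (\<pi> t \<omega>) (h \<omega>)"
      using H[of x] tail_sup_le_rate_of_tail_inf[of x] pi_pos[OF t]
    proof eventually_elim
      case (elim \<omega>)
      then have "h \<omega> \<le> rate_of_level lam (\<pi> t \<omega>) (tail_inf t x \<omega>)" by (metis order.trans)
      then show ?case using le_rate_of_level_iff[OF lam elim(3)] by blast
    qed
  qed measurable
  then show ?thesis using pi_pos[OF t] long_rate_eq
  proof eventually_elim
    case (elim \<omega>)
    then show ?case using le_rate_of_level_iff[OF lam elim(2)] by simp
  qed
qed

lemma long_tail_pareto_rate_eq: "AE \<omega> in M. long_tail_pareto_rate M F \<pi> lam t \<omega> = long_rate \<omega>"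
proof -
  have ess_inf_form: "long_tail_pareto_rate M F \<pi> lam t = ess_inf_fam M (F t) UNIV tail_sup"
    unfolding long_tail_pareto_rate_def ess_limsup_top_def tail_sup_def horizon_def rate_def[abs_def] by simp
  have ess_inf_tail_sup: "is_ess_inf_fam M (F t) UNIV tail_sup (ess_inf_fam M (F t) UNIV tail_sup)"
    by (rule is_ess_inf_fam_ess_inf_fam[OF prob F_subalgebra[OF t]]) simp
  have N[measurable]: "ess_inf_fam M (F t) UNIV tail_sup \<in> borel_measurable (F t)"
    using ess_inf_tail_sup by (simp add: is_ess_inf_fam_def)
  have le1: "AE \<omega> in M. ess_inf_fam M (F t) UNIV tail_sup \<omega> \<le> long_rate \<omega>"
    by (rule long_rate_greatest) (use ess_inf_tail_sup in \<open>auto simp: is_ess_inf_fam_def\<close>)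
  have le2: "AE \<omega> in M. long_rate \<omega> \<le> ess_inf_fam M (F t) UNIV tail_sup \<omega>"
    using ess_inf_tail_sup long_rate_le_tail_sup by (simp add: is_ess_inf_fam_def)
  from le1 le2 show ?thesis unfolding ess_inf_form by eventually_elim auto
qed

lemma long_tail_pareto_rate_formula: "AE \<omega> in M. 0 < long_tail_pareto_rate M F \<pi> lam t \<omega> \<and>
              long_tail_pareto_rate M F \<pi> lam t \<omega> < \<infinity> \<and>
              long_tail_pareto_rate M F \<pi> lam t \<omega> = ereal (lam * (\<pi> t \<omega> / theta t \<omega>) powr (1 / lam))"
  using long_tail_pareto_rate_eq theta_pos pi_pos[OF t]
  by eventually_elim (use lam in \<open>auto simp: long_rate_def\<close>)

lemma tail_inf_real_measurable[measurable]: "tail_inf_real t n \<in> borel_measurable M"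
  unfolding tail_inf_real_def by (rule borel_measurable_real_of_ereal[OF tail_inf_measurable])

lemma tail_inf_real_eq:
  "AE \<omega> in M. tail_inf t (real n) \<omega> = ereal (tail_inf_real t n \<omega>) \<and> 0 \<le> tail_inf_real t n \<omega> \<and> tail_inf_real t n \<omega> \<le> theta t \<omega>"
  using tail_inf_nonneg[of "real n"] tail_inf_le_Theta[of "real n"] Theta_eq_theta
proof eventually_elim
  case (elim \<omega>) then show ?case by (cases "tail_inf t (real n) \<omega>") (auto simp: tail_inf_real_def)
qed

lemma tail_inf_real_integrable: "integrable M (tail_inf_real t n)"
proof (rule Bochner_Integration.integrable_bound[OF theta_integrable])
  show "AE \<omega> in M. norm (tail_inf_real t n \<omega>) \<le> norm (theta t \<omega>)"
    using tail_inf_real_eq[of n] by eventually_elim auto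
qed (rule tail_inf_real_measurable)

lemma tail_inf_real_tendsto: "AE \<omega> in M. (\<lambda>n. tail_inf_real t n \<omega>) \<longlonglongrightarrow> theta t \<omega>"
  using Theta_eq_SUP incseq_tail_inf Theta_eq_theta
proof eventually_elim
  case (elim \<omega>)
  have "(\<lambda>n. tail_inf t (real n) \<omega>) \<longlonglongrightarrow> ereal (theta t \<omega>)"
    using LIMSEQ_SUP[OF elim(2)] elim(1,3) by simp
  then show ?case unfolding tail_inf_real_def by (rule lim_real_of_ereal)
qed

end

lemma cond_exp_weighted_le_weighted:
  assumes s: "0 \<le> s" "s \<le> t" and T: "t < T"
  shows "AE \<omega> in M. ereal (real_cond_exp M (F s) (\<lambda>\<omega>. (T - t) powr lam * cond_pi t T \<omega>) \<omega>)
    \<le> weighted s T \<omega>"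
proof -
  have t: "0 \<le> t" and T0: "0 \<le> T" using s T by auto
  interpret Fs: sigma_finite_subalgebra M "F s" by (rule F_sigma_finite[OF s(1)])
  have "AE \<omega> in M. real_cond_exp M (F s) (\<lambda>\<omega>. (T - t) powr lam * cond_pi t T \<omega>) \<omega> =
      (T - t) powr lam * real_cond_exp M (F s) (cond_pi t T) \<omega>"
    by (rule Fs.real_cond_exp_cmult[OF cond_pi_integrable[OF t T0]])
  moreover have "AE \<omega> in M. real_cond_exp M (F s) (cond_pi t T) \<omega> = cond_pi s T \<omega>"
    unfolding cond_pi_def
    by (rule Fs.real_cond_exp_nested_subalg[OF F_subalgebra[OF t] F_subalgebra_mono[OF s] pi_integrable[OF T0]])
  moreover have "AE \<omega> in M. 0 < cond_pi s T \<omega>" by (rule cond_pi_pos[OF s(1) T0])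
  ultimately show ?thesis
  proof eventually_elim
    case (elim \<omega>)
    have "(T - t) powr lam \<le> (T - s) powr lam" using s T lam by (intro powr_mono2) auto
    then have "(T - t) powr lam * cond_pi s T \<omega> \<le> (T - s) powr lam * cond_pi s T \<omega>"
      using elim(3) by (intro mult_right_mono) auto
    then show ?case using elim(1,2) by (simp add: weighted_def)
  qed
qed

lemma cond_exp_tail_inf_real_le_theta:
  assumes s: "0 \<le> s" "s \<le> t" and n: "t < real n"
  shows "AE \<omega> in M. real_cond_exp M (F s) (tail_inf_real t n) \<omega> \<le> theta s \<omega>"
proof -
  have t: "0 \<le> t" using s by simp
  interpret Fs: sigma_finite_subalgebra M "F s" by (rule F_sigma_finite[OF s(1)])
  have "AE \<omega> in M. ereal (real_cond_exp M (F s) (tail_inf_real t n) \<omega>) \<le> tail_inf s (real n) \<omega>"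
  proof (rule tail_inf_greatest[OF s(1)])
    show "(\<lambda>\<omega>. ereal (real_cond_exp M (F s) (tail_inf_real t n) \<omega>)) \<in> borel_measurable (F s)"
      by measurable
  next
    fix T assume "T \<in> horizon s (real n)"
    then have T: "t < T" and T_horizon: "T \<in> horizon t (real n)" using n by (auto simp: horizon_def)
    have "integrable M (\<lambda>\<omega>. (T - t) powr lam * cond_pi t T \<omega>)"
      using cond_pi_integrable[OF t] T t by simp
    moreover have "AE \<omega> in M. tail_inf_real t n \<omega> \<le> (T - t) powr lam * cond_pi t T \<omega>"
      using tail_inf_le[OF t T_horizon] tail_inf_real_eq[OF t, of n]
      by eventually_elim (auto simp: weighted_def)
    ultimately have "AE \<omega> in M. real_cond_exp M (F s) (tail_inf_real t n) \<omega> \<le>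
        real_cond_exp M (F s) (\<lambda>\<omega>. (T - t) powr lam * cond_pi t T \<omega>) \<omega>"
      using tail_inf_real_integrable[OF t] by (intro Fs.real_cond_exp_mono)
    then show "AE \<omega> in M. ereal (real_cond_exp M (F s) (tail_inf_real t n) \<omega>) \<le> weighted s T \<omega>"
      using cond_exp_weighted_le_weighted[OF s T]
      by eventually_elim (metis ereal_less_eq(3) order.trans)
  qed
  then show ?thesis using tail_inf_le_Theta[OF s(1), of "real n"] Theta_eq_theta[OF s(1)]
    by eventually_elim (metis order.trans ereal_less_eq(3))
qed

lemma cond_exp_theta_le:
  assumes s: "0 \<le> s" "s \<le> t"
  shows "AE \<omega> in M. real_cond_exp M (F s) (theta t) \<omega> \<le> theta s \<omega>"
proof -
  have t: "0 \<le> t" using s by simp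
  interpret Fs: sigma_finite_subalgebra M "F s" by (rule F_sigma_finite[OF s(1)])
  obtain N :: nat where N: "t < real N" using reals_Archimedean2 by blast
  show ?thesis
  proof (rule Fs.real_cond_exp_le_of_dominated_limit[OF tail_inf_real_tendsto[OF t] _ theta_integrable[OF t]])
    show "AE \<omega> in M. norm (tail_inf_real t n \<omega>) \<le> theta t \<omega>" for n
      using tail_inf_real_eq[OF t, of n] by eventually_elim auto
    show "\<forall>\<^sub>F n in sequentially. AE \<omega> in M. real_cond_exp M (F s) (tail_inf_real t n) \<omega> \<le> theta s \<omega>"
      unfolding eventually_sequentially
      by (intro exI[of _ N] allI impI cond_exp_tail_inf_real_le_theta[OF s])
         (meson N less_le_trans of_nat_le_iff)
  qed (use t s theta_integrable in auto)
qed

lemma supermartingale_theta: "supermartingale M F theta"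
  unfolding supermartingale_def adapted_def
  using theta_measurable_F theta_integrable cond_exp_theta_le by blast

end

theorem proposition10:
  fixes M :: "'a measure" and F :: "real \<Rightarrow> 'a measure"
    and \<pi> :: "real \<Rightarrow> 'a \<Rightarrow> real" and lam :: real
  assumes "prob_space M"
    and "filtration_on M F"
    and "usual_conditions M F"
    and "pricing_kernel M F \<pi>"
    and "lam > 0"
    and "asymptotically_tail_pareto M \<pi> lam"
  shows "\<exists>\<theta>. supermartingale M F \<theta> \<and> (\<forall>t\<ge>0. AE \<omega> in M. \<theta> t \<omega> > 0) \<and>
           (\<forall>t\<ge>0. AE \<omega> in M.
              0 < long_tail_pareto_rate M F \<pi> lam t \<omega> \<and>
              long_tail_pareto_rate M F \<pi> lam t \<omega> < \<infinity> \<and>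
              long_tail_pareto_rate M F \<pi> lam t \<omega> = ereal (lam * (\<pi> t \<omega> / \<theta> t \<omega>) powr (1 / lam)))"
proof -
  interpret tail_pareto_setting M F \<pi> lam
    using assms by (simp add: tail_pareto_setting_def)
  show ?thesis
    using supermartingale_theta theta_pos long_tail_pareto_rate_formula by blast
qed

end
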